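(* Let $T$ and $Q$ be session types and $X$ a type variable. If $S \in \mathrm{Sub}_{BU}(T[Q/X])$, then either $S = S'[Q/X]$ for some $S' \in \mathrm{Sub}_{BU}(T)$, or $S \in \mathrm{Sub}_{BU}(Q)$.
   Context: Session types (possibly containing free variables) are given by the grammar $T ::= \mathsf{end} \mid X \mid \mu X.T \mid {?}[T_1,\dots,T_n].S \mid {!}[T_1,\dots,T_n].S \mid \&\langle l_1:T_1,\dots,l_n:T_n\rangle \mid \oplus\langle l_1:T_1,\dots,l_n:T_n\rangle$ (input, output, branch, select), where $X$ ranges over type variables and $l_i$ over labels. Types are identified up to $\alpha$-conversion of bound variables, and all substitutions $T[Q/X]$ (replacing free occurrences of $X$ in $T$ by $Q$) are capture-avoiding. The set of bottom-up subterms $\mathrm{Sub}_{BU}(T)$ is defined by recursion on $T$: $\mathrm{Sub}_{BU}(\mathsf{end}) = \{\mathsf{end}\}$; $\mathrm{Sub}_{BU}(X) = \{X\}$; $\mathrm{Sub}_{BU}(\mu X.T') = \{\mu X.T'\} \cup \{S[\mu X.T'/X] \mid S \in \mathrm{Sub}_{BU}(T')\}$; $\mathrm{Sub}_{BU}(\&\langle l_i:T_i\rangle_{i}) = \{\&\langle l_i:T_i\rangle_i\} \cup \bigcup_i \mathrm{Sub}_{BU}(T_i)$, and likewise for $\oplus$; $\mathrm{Sub}_{BU}({?}[T_1,\dots,T_n].S) = \{{?}[T_1,\dots,T_n].S\} \cup \bigcup_i \mathrm{Sub}_{BU}(T_i) \cup \mathrm{Sub}_{BU}(S)$, and likewise for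 ${!}$. *)

theory Defs
  imports Main
begin

text \<open>Session types up to alpha-conversion, represented with de Bruijn indices.
  A type variable is an index; a free variable X of the paper corresponds to a
  free index (relative to a fixed naming context).\<close>

datatype 'l stype =
    End
  | TVar nat
  | Mu "'l stype"
  | In "'l stype list" "'l stype"
  | Out "'l stype list" "'l stype"
  | Branch "('l \<times> 'l stype) list"
  | Select "('l \<times> 'l stype) list"

primrec lift :: "nat \<Rightarrow> 'l stype \<Rightarrow> 'l stype" where
  "lift c End = End"
| "lift c (TVar n) = (if n < c then TVar n else TVar (Suc n))"
| "lift c (Mu t) = Mu (lift (Suc c) t)"
| "lift c (In ts s) = In (map (lift c) ts) (lift c s)"
| "lift c (Out ts s) = Out (map (lift c) ts) (lift c s)"
| "lift c (Branch bs) = Branch (map (map_prod id (lift c)) bs)"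
| "lift c (Select bs) = Select (map (map_prod id (lift c)) bs)"

text \<open>Capture-avoiding substitution T[Q/X] of Q for the free variable X (index k),
  where T and Q live in the same naming context (no variable is removed; Q may
  itself mention X).\<close>
primrec subst :: "nat \<Rightarrow> 'l stype \<Rightarrow> 'l stype \<Rightarrow> 'l stype" where
  "subst k Q End = End"
| "subst k Q (TVar n) = (if n = k then Q else TVar n)"
| "subst k Q (Mu t) = Mu (subst (Suc k) (lift 0 Q) t)"
| "subst k Q (In ts s) = In (map (subst k Q) ts) (subst k Q s)"
| "subst k Q (Out ts s) = Out (map (subst k Q) ts) (subst k Q s)"
| "subst k Q (Branch bs) = Branch (map (map_prod id (subst k Q)) bs)"
| "subst k Q (Select bs) = Select (map (map_prod id (subst k Q)) bs)"

text \<open>Substitution for the variable bound by a removed binder (index k), as in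
  unfolding S[mu X.T'/X] where S lives under the binder of mu X.T':
  indices above k are decremented since the binder disappears.\<close>
primrec bsubst :: "nat \<Rightarrow> 'l stype \<Rightarrow> 'l stype \<Rightarrow> 'l stype" where
  "bsubst k Q End = End"
| "bsubst k Q (TVar n) = (if n < k then TVar n else if n = k then Q else TVar (n - 1))"
| "bsubst k Q (Mu t) = Mu (bsubst (Suc k) (lift 0 Q) t)"
| "bsubst k Q (In ts s) = In (map (bsubst k Q) ts) (bsubst k Q s)"
| "bsubst k Q (Out ts s) = Out (map (bsubst k Q) ts) (bsubst k Q s)"
| "bsubst k Q (Branch bs) = Branch (map (map_prod id (bsubst k Q)) bs)"
| "bsubst k Q (Select bs) = Select (map (map_prod id (bsubst k Q)) bs)"

fun subBU :: "'l stype \<Rightarrow> 'l stype set" where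
  "subBU End = {End}"
| "subBU (TVar n) = {TVar n}"
| "subBU (Mu t) = insert (Mu t) (bsubst 0 (Mu t) ` subBU t)"
| "subBU (In ts s) = insert (In ts s) ((\<Union>t\<in>set ts. subBU t) \<union> subBU s)"
| "subBU (Out ts s) = insert (Out ts s) ((\<Union>t\<in>set ts. subBU t) \<union> subBU s)"
| "subBU (Branch bs) = insert (Branch bs) (\<Union>p\<in>set bs. subBU (snd p))"
| "subBU (Select bs) = insert (Select bs) (\<Union>p\<in>set bs. subBU (snd p))"

end

theory Submission
  imports Defs
begin

text \<open>The only interesting case is \<open>\<mu>X.T'\<close>: substitution commutes with
  unfolding (the usual substitution lemma), and a bottom-up subterm of \<open>Q\<close> shifted under the
  binder is unfolded back to itself, because unfolding cancels the shift.\<close>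

lemma bsubst_lift: "bsubst k P (lift k Q) = Q"
  by (induction Q arbitrary: k P) (auto intro: map_idI prod_eqI)

lemma lift_lift: "i \<le> j \<Longrightarrow> lift i (lift j Q) = lift (Suc j) (lift i Q)"
  by (induction Q arbitrary: i j) auto

lemma lift_subst: "i \<le> j \<Longrightarrow> lift i (subst j Q P) = subst (Suc j) (lift i Q) (lift i P)"
  by (induction P arbitrary: i j Q) (auto simp: lift_lift)

lemma lift_bsubst: "i \<le> k \<Longrightarrow> lift k (bsubst i P R) = bsubst i (lift k P) (lift (Suc k) R)"
  by (induction R arbitrary: i k P) (auto simp: lift_lift)

lemma subst_bsubst:
  "k \<le> j \<Longrightarrow> subst j Q (bsubst k P R) = bsubst k (subst j Q P) (subst (Suc j) (lift k Q) R)"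
  by (induction R arbitrary: k j Q P) (auto simp: bsubst_lift lift_lift lift_subst)

lemma subBU_lift: "subBU (lift k Q) = lift k ` subBU Q"
proof (induction Q arbitrary: k)
  case (Mu q)
  have "bsubst 0 (lift k (Mu q)) (lift (Suc k) R) = lift k (bsubst 0 (Mu q) R)" for R
    by (simp add: lift_bsubst)
  then show ?case
    by (simp add: Mu.IH image_image)
qed (auto simp: image_Union image_UN)

lemma subBU_subst: "subBU (subst X Q T) \<subseteq> subst X Q ` subBU T \<union> subBU Q"
proof (induction T arbitrary: X Q)
  case (Mu t)
  let ?t = "subst (Suc X) (lift 0 Q) t"
  have "bsubst 0 (Mu ?t) ` subBU ?t
      \<subseteq> bsubst 0 (subst X Q (Mu t)) ` (subst (Suc X) (lift 0 Q) ` subBU t \<union> lift 0 ` subBU Q)"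
    using Mu.IH[of "Suc X" "lift 0 Q"] by (auto simp: subBU_lift)
  also have "\<dots> = subst X Q ` bsubst 0 (Mu t) ` subBU t \<union> subBU Q"
    by (auto simp: image_image image_Un subst_bsubst[of 0 X] bsubst_lift)
  finally show ?case
    by auto
qed (fastforce+)

theorem mainTheorem2:
  fixes T Q S :: "'l stype" and X :: nat
  assumes "S \<in> subBU (subst X Q T)"
  shows "(\<exists>S' \<in> subBU T. S = subst X Q S') \<or> S \<in> subBU Q"
  using subBU_subst assms by blast

end
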